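(* For every prime power $q$, all integers $n$, $r\le\lfloor n/2\rfloor$ and $0<\rho<r$, $$K_{\mathrm{C}}(q,n,r,\rho)\le \left\{1 - \log_{{n\brack r}}\left({n\brack r} - V_{\mathrm{C}}(\rho)\right)\right\}^{-1} + 1.$$
   Context: ${m\brack k}=\prod_{i=0}^{k-1}\frac{q^m-q^i}{q^k-q^i}$ is the Gaussian binomial. $N_{\mathrm{C}}(d) = q^{d^2}{r\brack d}{n-r \brack d}$ and $V_{\mathrm{C}}(t)=\sum_{d=0}^t N_{\mathrm{C}}(d)$. $E_r(q,n)$ is the set of $r$-dimensional subspaces of $\mathrm{GF}(q)^n$ with injection distance $d_{\mathrm{I}}(U,V)=\dim(U+V)-\min\{\dim U,\dim V\}$; the covering radius of a nonempty $\mathcal{C}\subseteq E_r(q,n)$ is $\max_U\min_{C\in\mathcal{C}}d_{\mathrm{I}}(U,C)$, and $K_{\mathrm{C}}(q,n,r,\rho)$ is the minimum cardinality of a subset of $E_r(q,n)$ with covering radius at most $\rho$. *)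

theory Defs
  imports Complex_Main "HOL-Library.Function_Algebras"
begin

text \<open>Vectors of GF(q)^n are modelled as functions nat => 'a that vanish
outside the index set {0..<n}; 'a is a finite field (so q = CARD('a)).\<close>

definition vscale :: "'a::field \<Rightarrow> (nat \<Rightarrow> 'a) \<Rightarrow> (nat \<Rightarrow> 'a)" where
  "vscale c v = (\<lambda>i. c * v i)"

definition ambient :: "nat \<Rightarrow> (nat \<Rightarrow> 'a::field) set" where
  "ambient n = {v. \<forall>i\<ge>n. v i = 0}"

definition sdim :: "(nat \<Rightarrow> 'a::field) set \<Rightarrow> nat" where
  "sdim U = vector_space.dim vscale U"

definition Er :: "'a::{finite,field} itself \<Rightarrow> nat \<Rightarrow> nat \<Rightarrow> (nat \<Rightarrow> 'a) set set" where
  "Er _ n r = {U. module.subspace vscale U \<and> U \<subseteq> ambient n \<and> sdim U = r}"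

definition dI :: "(nat \<Rightarrow> 'a::field) set \<Rightarrow> (nat \<Rightarrow> 'a) set \<Rightarrow> nat" where
  "dI U V = sdim (module.span vscale (U \<union> V)) - min (sdim U) (sdim V)"

definition covering_radius ::
  "'a::{finite,field} itself \<Rightarrow> nat \<Rightarrow> nat \<Rightarrow> (nat \<Rightarrow> 'a) set set \<Rightarrow> nat" where
  "covering_radius T n r C = Max ((\<lambda>U. Min ((\<lambda>D. dI U D) ` C)) ` Er T n r)"

definition KC :: "'a::{finite,field} itself \<Rightarrow> nat \<Rightarrow> nat \<Rightarrow> nat \<Rightarrow> nat" where
  "KC T n r \<rho> = Min {card C | C. C \<subseteq> Er T n r \<and> C \<noteq> {} \<and> covering_radius T n r C \<le> \<rho>}"

definition gauss_binom :: "real \<Rightarrow> nat \<Rightarrow> nat \<Rightarrow> real" where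
  "gauss_binom q m k = (\<Prod>i<k. (q ^ m - q ^ i) / (q ^ k - q ^ i))"

definition NC :: "real \<Rightarrow> nat \<Rightarrow> nat \<Rightarrow> nat \<Rightarrow> real" where
  "NC q n r d = q ^ (d^2) * gauss_binom q r d * gauss_binom q (n - r) d"

definition VC :: "real \<Rightarrow> nat \<Rightarrow> nat \<Rightarrow> nat \<Rightarrow> real" where
  "VC q n r t = (\<Sum>d = 0..t. NC q n r d)"

end

theory Submission
  imports Defs
begin

text \<open>
Let \<open>E = E\<^sub>r(q,n)\<close> and \<open>N = |E| = [n, r]\<close>. An injection ball of radius \<open>\<rho>\<close> around \<open>U\<close> contains
at least \<open>V\<^sub>C(\<rho>)\<close> subspaces: for a fixed \<open>W \<subseteq> U\<close> of codimension \<open>d \<le> \<rho>\<close>, the \<open>r\<close>-spaces \<open>Y\<close> with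
\<open>Y \<inter> U = W\<close> are obtained by extending \<open>W\<close> by \<open>d\<close> vectors independent over \<open>U\<close>; there are
\<open>q^(d\<^sup>2) [n - r, d]\<close> of them and all lie at distance \<open>d\<close> from \<open>U\<close>. Hence at most \<open>(N - V\<^sub>C(\<rho>))^k\<close>
lists of length \<open>k\<close> in \<open>E\<close> miss the ball of a given \<open>U\<close>, and by the union bound some list meets
every ball once \<open>N (N - V\<^sub>C(\<rho>))^k < N^k\<close>. The least such \<open>k\<close> is at most
\<open>1 / (1 - log\<^sub>N (N - V\<^sub>C(\<rho>))) + 1\<close>.
\<close>

section \<open>Subspaces of a finite vector space\<close>

interpretation V: vector_space "vscale :: 'a::field \<Rightarrow> (nat \<Rightarrow> 'a) \<Rightarrow> _"
  by unfold_locales (simp_all add: vscale_def fun_eq_iff algebra_simps)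

declare V.span_eq_iff[simp del]

lemma sdim_eq_dim: "sdim U = V.dim U"
  by (simp add: sdim_def)

lemma two_le_card_field: "2 \<le> card (UNIV :: 'a::{finite,field} set)"
proof -
  have "card {0::'a, 1} \<le> card (UNIV :: 'a set)" by (rule card_mono) auto
  then show ?thesis by simp
qed

lemma card_field_power_inject:
  "card (UNIV::'a::{finite,field} set) ^ a = card (UNIV::'a set) ^ b \<Longrightarrow> a = b"
  using two_le_card_field[where 'a='a] by (simp add: power_inject_exp)

lemma subspace_ambient: "V.subspace (ambient n :: (nat \<Rightarrow> 'a::field) set)"
  by (auto simp: V.subspace_def ambient_def vscale_def)

lemma span_subset_ambient: "A \<subseteq> ambient n \<Longrightarrow> V.span A \<subseteq> ambient n"
  by (rule V.span_minimal[OF _ subspace_ambient])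

lemma ambient_eq_image_lists:
  "ambient n = (\<lambda>xs i. if i < n then xs ! i else 0) ` {xs. set xs \<subseteq> UNIV \<and> length xs = n}"
proof (intro set_eqI iffI)
  fix v :: "nat \<Rightarrow> 'a" assume "v \<in> ambient n"
  then have "v = (\<lambda>i. if i < n then map v [0..<n] ! i else 0)"
    by (auto simp: ambient_def fun_eq_iff)
  then show "v \<in> (\<lambda>xs i. if i < n then xs ! i else 0) ` {xs. set xs \<subseteq> UNIV \<and> length xs = n}"
    by (intro image_eqI[of _ _ "map v [0..<n]"]) auto
qed (auto simp: ambient_def)

lemma card_ambient: "card (ambient n :: (nat \<Rightarrow> 'a::{finite,field}) set) = card (UNIV :: 'a set) ^ n"
proof -
  let ?f = "\<lambda>xs i. if i < n then xs ! i else (0::'a)"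
  have "inj_on ?f {xs. set xs \<subseteq> UNIV \<and> length xs = n}"
  proof (rule inj_onI)
    fix xs ys assume "xs \<in> {xs. set xs \<subseteq> UNIV \<and> length xs = n}" "ys \<in> {xs. set xs \<subseteq> UNIV \<and> length xs = n}"
      and eq: "?f xs = ?f ys"
    moreover have "xs ! i = ys ! i" if "i < n" for i
      using fun_cong[OF eq, of i] that by simp
    ultimately show "xs = ys" by (simp add: nth_equalityI)
  qed
  then show ?thesis
    unfolding ambient_eq_image_lists using card_lists_length_eq[of "UNIV::'a set" n]
    by (simp add: card_image)
qed

lemma finite_ambient: "finite (ambient n :: (nat \<Rightarrow> 'a::{finite,field}) set)"
  by (rule card_ge_0_finite) (simp add: card_ambient finite_UNIV_card_ge_0)

lemma finite_subset_ambient: "A \<subseteq> ambient n \<Longrightarrow> finite (A :: (nat \<Rightarrow> 'a::{finite,field}) set)"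
  using finite_ambient finite_subset by blast

lemma card_span_insert:
  fixes S :: "(nat \<Rightarrow> 'a::{finite,field}) set"
  assumes fin: "finite (V.span S)" and x: "x \<notin> V.span S"
  shows "card (V.span (insert x S)) = card (UNIV :: 'a set) * card (V.span S)"
proof -
  let ?g = "\<lambda>(k::'a, z). vscale k x + z"
  have img: "?g ` (UNIV \<times> V.span S) = V.span (insert x S)"
  proof (intro set_eqI iffI)
    fix y assume "y \<in> ?g ` (UNIV \<times> V.span S)"
    then obtain a b where "y = vscale a x + b" "b \<in> V.span S" by auto
    then show "y \<in> V.span (insert x S)"
      unfolding V.span_insert by (intro CollectI exI[of _ a]) simp
  next
    fix y assume "y \<in> V.span (insert x S)"
    then obtain k where "y - vscale k x \<in> V.span S" by (auto simp: V.span_insert)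
    then show "y \<in> ?g ` (UNIV \<times> V.span S)"
      by (intro image_eqI[of _ _ "(k, y - vscale k x)"]) auto
  qed
  have "inj_on ?g (UNIV \<times> V.span S)"
  proof (rule inj_onI, clarify)
    fix k z k' z' assume z: "z \<in> V.span S" "z' \<in> V.span S"
      and eq: "vscale k x + z = vscale k' x + z'"
    show "k = k' \<and> z = z'"
    proof (cases "k = k'")
      case True
      then show ?thesis using eq by simp
    next
      case False
      have "vscale (k - k') x = z' - z"
        using eq by (simp add: vscale_def fun_eq_iff algebra_simps)
      then have "vscale (inverse (k - k')) (vscale (k - k') x) \<in> V.span S"
        using z by (simp add: V.span_diff V.span_scale)
      then have "x \<in> V.span S"
        using False by (simp add: vscale_def mult.assoc[symmetric])
      with x show ?thesis by simp
    qed
  qed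
  then show ?thesis using card_image img by (fastforce simp: card_cartesian_product)
qed

lemma card_span_independent:
  fixes B :: "(nat \<Rightarrow> 'a::{finite,field}) set"
  assumes "V.independent B" "B \<subseteq> ambient n"
  shows "card (V.span B) = card (UNIV::'a set) ^ card B"
proof -
  have "finite B" using assms(2) by (rule finite_subset_ambient)
  then show ?thesis using assms
  proof (induction B rule: finite_induct)
    case empty
    then show ?case by simp
  next
    case (insert b F)
    have "V.independent F" "b \<notin> V.span F"
      using insert.prems(1) insert.hyps(2) by (simp_all add: V.independent_insert)
    moreover have "finite (V.span F)"
      using insert.prems(2) by (intro finite_subset_ambient span_subset_ambient) auto
    ultimately show ?case using insert card_span_insert[of F b] by simp
  qed
qed

lemma card_span:
  fixes X :: "(nat \<Rightarrow> 'a::{finite,field}) set"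
  assumes "X \<subseteq> ambient n"
  shows "card (V.span X) = card (UNIV::'a set) ^ V.dim X"
proof -
  obtain B where B: "B \<subseteq> X" "V.independent B" "X \<subseteq> V.span B" "card B = V.dim X"
    using V.basis_exists by blast
  have "V.span B = V.span X"
    using B(1,3) V.span_mono V.span_minimal[OF _ V.subspace_span] by (metis subset_antisym)
  then show ?thesis using card_span_independent[OF B(2)] B assms by force
qed

lemma card_subspace:
  fixes X :: "(nat \<Rightarrow> 'a::{finite,field}) set"
  assumes "X \<subseteq> ambient n" "V.subspace X"
  shows "card X = card (UNIV::'a set) ^ V.dim X"
proof -
  have "V.span X = X" using assms(2) by (simp add: V.span_eq_iff)
  then show ?thesis using card_span[OF assms(1)] by simp
qed

lemma dim_mono_subspace:
  fixes W U :: "(nat \<Rightarrow> 'a::{finite,field}) set"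
  assumes "W \<subseteq> U" "V.subspace W" "V.subspace U" "U \<subseteq> ambient n"
  shows "V.dim W \<le> V.dim U"
proof -
  have "card W \<le> card U" using assms by (metis card_mono finite_subset_ambient)
  then have "card (UNIV::'a set) ^ V.dim W \<le> card (UNIV::'a set) ^ V.dim U"
    using card_subspace[of W n] card_subspace[of U n] assms by auto
  then show ?thesis using two_le_card_field[where 'a='a] by (simp add: power_increasing_iff)
qed

section \<open>Counting subspaces\<close>

fun indep_over :: "(nat \<Rightarrow> 'a::field) set \<Rightarrow> (nat \<Rightarrow> 'a) list \<Rightarrow> bool" where
  "indep_over X [] = True"
| "indep_over X (v # vs) = (v \<notin> V.span (X \<union> set vs) \<and> indep_over X vs)"

lemma indep_over_antimono: "X \<subseteq> X' \<Longrightarrow> indep_over X' vs \<Longrightarrow> indep_over X vs"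
proof (induction vs)
  case Nil
  then show ?case by simp
next
  case (Cons v vs)
  have "V.span (X \<union> set vs) \<subseteq> V.span (X' \<union> set vs)"
    using Cons.prems(1) by (intro V.span_mono) auto
  then show ?case using Cons by auto
qed

lemma card_span_Un_indep_over:
  fixes X :: "(nat \<Rightarrow> 'a::{finite,field}) set"
  assumes "X \<subseteq> ambient n" "set vs \<subseteq> ambient n" "indep_over X vs"
  shows "card (V.span (X \<union> set vs)) = card (V.span X) * card (UNIV::'a set) ^ length vs"
  using assms
proof (induction vs)
  case Nil
  then show ?case by simp
next
  case (Cons v vs)
  have "finite (V.span (X \<union> set vs))"
    using Cons.prems by (intro finite_subset_ambient span_subset_ambient) auto
  moreover have "X \<union> set (v # vs) = insert v (X \<union> set vs)" by auto
  ultimately show ?case using card_span_insert[of "X \<union> set vs" v] Cons by simp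
qed

lemma dim_Un_indep_over:
  fixes X :: "(nat \<Rightarrow> 'a::{finite,field}) set"
  assumes "X \<subseteq> ambient n" "set vs \<subseteq> ambient n" "indep_over X vs"
  shows "V.dim (X \<union> set vs) = V.dim X + length vs"
proof -
  have "card (UNIV::'a set) ^ V.dim (X \<union> set vs) = card (UNIV::'a set) ^ (V.dim X + length vs)"
    using card_span_Un_indep_over[OF assms] card_span[OF assms(1)] card_span[of "X \<union> set vs" n] assms
    by (simp add: power_add)
  then show ?thesis by (rule card_field_power_inject)
qed

lemma dim_empty: "V.dim ({} :: (nat \<Rightarrow> 'a::{finite,field}) set) = 0"
proof -
  have "card (V.span ({} :: (nat \<Rightarrow> 'a) set)) = 1" by (simp add: V.span_empty)
  then have "card (UNIV::'a set) ^ V.dim ({} :: (nat \<Rightarrow> 'a) set) = card (UNIV::'a set) ^ 0"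
    using card_span[of "{}" 0] by (metis empty_subsetI power_0)
  then show ?thesis by (rule card_field_power_inject)
qed

lemma span_Un_indep_over_eq:
  fixes X Y :: "(nat \<Rightarrow> 'a::{finite,field}) set"
  assumes Y: "V.subspace Y" "Y \<subseteq> ambient n" and vs: "X \<subseteq> Y" "set vs \<subseteq> Y" "indep_over X vs"
    and card_Y: "card Y = card (V.span X) * card (UNIV::'a set) ^ length vs"
  shows "V.span (X \<union> set vs) = Y"
proof -
  have sub: "V.span (X \<union> set vs) \<subseteq> Y" using vs Y(1) by (intro V.span_minimal) auto
  moreover have "card (V.span (X \<union> set vs)) = card Y"
    using card_span_Un_indep_over[of X n vs] vs Y(2) card_Y by auto
  ultimately show ?thesis using card_subset_eq[OF finite_subset_ambient[OF Y(2)]] by blast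
qed

lemma card_indep_over_lists:
  fixes S X :: "(nat \<Rightarrow> 'a::{finite,field}) set"
  assumes S: "V.subspace S" "S \<subseteq> ambient n" and X: "X \<subseteq> S"
  shows "card {vs. set vs \<subseteq> S \<and> length vs = k \<and> indep_over X vs}
       = (\<Prod>i<k. card S - card (V.span X) * card (UNIV::'a set) ^ i)"
proof (induction k)
  case 0
  have "{vs. set vs \<subseteq> S \<and> length vs = 0 \<and> indep_over X vs} = {[]}" by auto
  then show ?case by simp
next
  case (Suc k)
  let ?L = "{vs. set vs \<subseteq> S \<and> length vs = k \<and> indep_over X vs}"
  have finS: "finite S" using S(2) by (rule finite_subset_ambient)
  have finL: "finite ?L"
    by (rule finite_subset[OF _ finite_lists_length_eq[OF finS, of k]]) auto
  have eq: "{vs. set vs \<subseteq> S \<and> length vs = Suc k \<and> indep_over X vs}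
      = (\<lambda>(vs, v). v # vs) ` (SIGMA vs:?L. S - V.span (X \<union> set vs))"
    by (auto simp: length_Suc_conv)
  have inj: "inj_on (\<lambda>(vs, v). v # vs) (SIGMA vs:?L. S - V.span (X \<union> set vs))"
    by (rule inj_onI) auto
  have card_choices: "card (S - V.span (X \<union> set vs))
      = card S - card (V.span X) * card (UNIV::'a set) ^ k" if "vs \<in> ?L" for vs
  proof -
    have sub: "V.span (X \<union> set vs) \<subseteq> S"
      using that X S(1) by (intro V.span_minimal) auto
    have "card (V.span (X \<union> set vs)) = card (V.span X) * card (UNIV::'a set) ^ k"
      using card_span_Un_indep_over[of X n vs] that X S(2) by auto
    then show ?thesis using card_Diff_subset[OF finite_subset[OF sub finS] sub] by simp
  qed
  have "card {vs. set vs \<subseteq> S \<and> length vs = Suc k \<and> indep_over X vs}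
      = (\<Sum>vs\<in>?L. card (S - V.span (X \<union> set vs)))"
    unfolding eq card_image[OF inj] by (rule card_SigmaI[OF finL]) (use finS in auto)
  also have "\<dots> = card ?L * (card S - card (V.span X) * card (UNIV::'a set) ^ k)"
    using card_choices by simp
  finally show ?case using Suc.IH by simp
qed

lemma card_by_uniform_fibers:
  assumes "finite A" "f ` A \<subseteq> B" "finite B" "\<And>b. b \<in> B \<Longrightarrow> card {a\<in>A. f a = b} = c"
  shows "card A = card B * c"
proof -
  have "A = (\<Union>b\<in>B. {a\<in>A. f a = b})" using assms(2) by auto
  moreover have "card (\<Union>b\<in>B. {a\<in>A. f a = b}) = (\<Sum>b\<in>B. card {a\<in>A. f a = b})"
    by (rule card_UN_disjoint) (use assms(1,3) in auto)
  ultimately have "card A = (\<Sum>b\<in>B. card {a\<in>A. f a = b})" by simp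
  also have "\<dots> = card B * c" using assms(4) by simp
  finally show ?thesis .
qed

definition subspaces :: "(nat \<Rightarrow> 'a::field) set \<Rightarrow> nat \<Rightarrow> (nat \<Rightarrow> 'a) set set" where
  "subspaces S k = {Y. V.subspace Y \<and> Y \<subseteq> S \<and> V.dim Y = k}"

lemma Er_eq_subspaces: "Er T n r = subspaces (ambient n) r"
  by (auto simp: Er_def subspaces_def sdim_eq_dim)

lemma finite_subspaces:
  "S \<subseteq> ambient n \<Longrightarrow> finite (subspaces S k :: (nat \<Rightarrow> 'a::{finite,field}) set set)"
  by (rule finite_subset[of _ "Pow S"]) (auto simp: subspaces_def dest: finite_subset_ambient)

text \<open>Double counting: every \<open>k\<close>-subspace of \<open>S\<close> is the span of exactly \<open>\<Prod>i<k. q^k - q^i\<close>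
independent \<open>k\<close>-lists, namely its ordered bases.\<close>

lemma card_subspaces_mult:
  fixes S :: "(nat \<Rightarrow> 'a::{finite,field}) set"
  assumes S: "V.subspace S" "S \<subseteq> ambient n"
  shows "card (subspaces S k) * (\<Prod>i<k. card (UNIV::'a set) ^ k - card (UNIV::'a set) ^ i)
       = (\<Prod>i<k. card S - card (UNIV::'a set) ^ i)"
proof -
  let ?q = "card (UNIV::'a set)"
  let ?A = "{vs. set vs \<subseteq> S \<and> length vs = k \<and> indep_over {} vs}"
  have finA: "finite ?A"
    by (rule finite_subset[OF _ finite_lists_length_eq[OF finite_subset_ambient[OF S(2)], of k]]) auto
  have img: "(\<lambda>vs. V.span (set vs)) ` ?A \<subseteq> subspaces S k"
  proof clarify
    fix vs assume vs: "set vs \<subseteq> S" "indep_over {} vs" "k = length vs"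
    have "V.span (set vs) \<subseteq> S" using vs S by (intro V.span_minimal) auto
    moreover have "V.dim (set vs) = length vs"
      using dim_Un_indep_over[of "{}" n vs] dim_empty vs S(2) by auto
    ultimately show "V.span (set vs) \<in> subspaces S (length vs)" by (simp add: subspaces_def)
  qed
  have fiber: "card {vs\<in>?A. V.span (set vs) = Y} = (\<Prod>i<k. ?q ^ k - ?q ^ i)"
    if Y: "Y \<in> subspaces S k" for Y
  proof -
    have Y': "V.subspace Y" "Y \<subseteq> ambient n" "Y \<subseteq> S"
      using Y S by (auto simp: subspaces_def)
    have cY: "card Y = ?q ^ k" using card_subspace[OF Y'(2,1)] Y by (simp add: subspaces_def)
    have "{vs\<in>?A. V.span (set vs) = Y} = {vs. set vs \<subseteq> Y \<and> length vs = k \<and> indep_over {} vs}"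
      using V.span_superset span_Un_indep_over_eq[OF Y'(1,2), of "{}"] Y'(3) cY by auto
    also have "card \<dots> = (\<Prod>i<k. card Y - ?q ^ i)"
      using card_indep_over_lists[OF Y'(1,2), of "{}" k] by simp
    finally show ?thesis using cY by simp
  qed
  have "card ?A = (\<Prod>i<k. card S - ?q ^ i)"
    using card_indep_over_lists[OF S, of "{}" k] by simp
  moreover have "card ?A = card (subspaces S k) * (\<Prod>i<k. ?q ^ k - ?q ^ i)"
    by (rule card_by_uniform_fibers[OF finA img finite_subspaces[OF S(2)] fiber])
  ultimately show ?thesis by simp
qed

section \<open>Subspaces meeting a fixed subspace\<close>

definition meeting_subspaces ::
  "nat \<Rightarrow> (nat \<Rightarrow> 'a::field) set \<Rightarrow> (nat \<Rightarrow> 'a) set \<Rightarrow> (nat \<Rightarrow> 'a) set set" where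
  "meeting_subspaces n U W = {Y. V.subspace Y \<and> Y \<subseteq> ambient n \<and> V.dim Y = V.dim U \<and> Y \<inter> U = W}"

lemma finite_meeting_subspaces:
  "finite (meeting_subspaces n U (W :: (nat \<Rightarrow> 'a::{finite,field}) set))"
  by (rule finite_subset[of _ "Pow (ambient n)"]) (auto simp: meeting_subspaces_def finite_ambient)

lemma span_indep_over_Int_subset:
  fixes U W :: "(nat \<Rightarrow> 'a::field) set"
  assumes W: "V.subspace W" "W \<subseteq> U" and U: "V.subspace U"
  shows "indep_over U vs \<Longrightarrow> V.span (W \<union> set vs) \<inter> U \<subseteq> W"
proof (induction vs)
  case Nil
  then show ?case using V.span_eq_iff[THEN iffD2, OF W(1)] by simp
next
  case (Cons v vs)
  show ?case
  proof
    fix y assume y: "y \<in> V.span (W \<union> set (v # vs)) \<inter> U"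
    have "W \<union> set (v # vs) = insert v (W \<union> set vs)" by auto
    with y obtain k where k: "y - vscale k v \<in> V.span (W \<union> set vs)" "y \<in> U"
      by (auto simp: V.span_insert)
    show "y \<in> W"
    proof (cases "k = 0")
      case True
      then have "y - vscale k v = y" by (simp add: vscale_def fun_eq_iff)
      then show ?thesis using k Cons by auto
    next
      case False
      have "V.span (W \<union> set vs) \<subseteq> V.span (U \<union> set vs)" using W by (intro V.span_mono) auto
      then have "y - vscale k v \<in> V.span (U \<union> set vs)" using k(1) by blast
      moreover have "y \<in> V.span (U \<union> set vs)" using k(2) by (intro V.span_base) auto
      ultimately have "y - (y - vscale k v) \<in> V.span (U \<union> set vs)"
        by (simp only: V.span_diff)
      then have "vscale (inverse k) (y - (y - vscale k v)) \<in> V.span (U \<union> set vs)"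
        by (rule V.span_scale)
      moreover have "vscale (inverse k) (y - (y - vscale k v)) = v"
        using False by (simp add: vscale_def fun_eq_iff mult.assoc[symmetric])
      ultimately have "v \<in> V.span (U \<union> set vs)" by simp
      then show ?thesis using Cons.prems by simp
    qed
  qed
qed

lemma indep_over_enlarge:
  fixes U W Y :: "(nat \<Rightarrow> 'a::field) set"
  assumes Y: "V.subspace Y" and U: "V.subspace U" and W: "W \<subseteq> U" "Y \<inter> U \<subseteq> W"
  shows "set vs \<subseteq> Y \<Longrightarrow> indep_over W vs \<Longrightarrow> indep_over U vs"
proof (induction vs)
  case Nil
  then show ?case by simp
next
  case (Cons v vs)
  have "v \<notin> V.span (U \<union> set vs)"
  proof
    assume "v \<in> V.span (U \<union> set vs)"
    then obtain a b where ab: "v = a + b" "a \<in> U" "b \<in> V.span (set vs)"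
      using V.span_eq_iff[THEN iffD2, OF U] by (auto simp: V.span_Un)
    have "V.span (set vs) \<subseteq> Y" using Cons.prems(1) Y by (intro V.span_minimal) auto
    then have "v \<in> Y" "b \<in> Y" using ab Cons.prems(1) by auto
    then have "a \<in> Y" using V.subspace_diff[OF Y] ab(1) by force
    then have "a \<in> V.span (W \<union> set vs)" using ab(2) W(2) by (intro V.span_base) auto
    moreover have "b \<in> V.span (W \<union> set vs)"
      using ab(3) V.span_mono[of "set vs" "W \<union> set vs"] by auto
    ultimately have "v \<in> V.span (W \<union> set vs)" using ab(1) V.span_add by simp
    then show False using Cons.prems(2) by simp
  qed
  then show ?case using Cons by simp
qed

text \<open>Extending \<open>W\<close> by a \<open>U\<close>-independent list of length \<open>r - j\<close> produces every \<open>Y\<close> meeting \<open>U\<close> in \<open>W\<close>,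
each one from exactly as many lists as \<open>Y\<close> has \<open>W\<close>-independent lists of that length.\<close>

lemma meeting_subspaces_fiber:
  fixes U W :: "(nat \<Rightarrow> 'a::{finite,field}) set"
  assumes U: "V.subspace U" "U \<subseteq> ambient n" "V.dim U = r" and W: "W \<in> subspaces U j"
    and Y: "Y \<in> meeting_subspaces n U W"
  shows "{vs \<in> {vs. set vs \<subseteq> ambient n \<and> length vs = r - j \<and> indep_over U vs}.
            V.span (W \<union> set vs) = Y}
       = {vs. set vs \<subseteq> Y \<and> length vs = r - j \<and> indep_over W vs}"
    and "card {vs. set vs \<subseteq> Y \<and> length vs = r - j \<and> indep_over W vs}
       = (\<Prod>i<r-j. card (UNIV::'a set) ^ r - card (UNIV::'a set) ^ j * card (UNIV::'a set) ^ i)"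
proof -
  let ?q = "card (UNIV::'a set)"
  have W': "V.subspace W" "W \<subseteq> U" "V.dim W = j" "W \<subseteq> ambient n"
    using W U by (auto simp: subspaces_def)
  have jr: "j \<le> r" using dim_mono_subspace[OF W'(2,1) U(1,2)] W' U by simp
  have Y': "V.subspace Y" "Y \<subseteq> ambient n" "V.dim Y = r" "Y \<inter> U = W"
    using Y U by (auto simp: meeting_subspaces_def)
  have cY: "card Y = ?q ^ r" using card_subspace[OF Y'(2,1)] Y'(3) by simp
  have cW: "card (V.span W) = ?q ^ j" using card_span[OF W'(4)] W'(3) by simp
  have WY: "W \<subseteq> Y" using Y'(4) by blast
  show "{vs \<in> {vs. set vs \<subseteq> ambient n \<and> length vs = r - j \<and> indep_over U vs}.
            V.span (W \<union> set vs) = Y}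
       = {vs. set vs \<subseteq> Y \<and> length vs = r - j \<and> indep_over W vs}"
  proof (intro set_eqI iffI)
    fix vs
    assume "vs \<in> {vs \<in> {vs. set vs \<subseteq> ambient n \<and> length vs = r - j \<and> indep_over U vs}.
                     V.span (W \<union> set vs) = Y}"
    then show "vs \<in> {vs. set vs \<subseteq> Y \<and> length vs = r - j \<and> indep_over W vs}"
      using V.span_superset[of "W \<union> set vs"] indep_over_antimono[OF W'(2)] by auto
  next
    fix vs assume "vs \<in> {vs. set vs \<subseteq> Y \<and> length vs = r - j \<and> indep_over W vs}"
    then have vs: "set vs \<subseteq> Y" "length vs = r - j" "indep_over W vs" by auto
    have "card Y = card (V.span W) * ?q ^ length vs"
      using jr cY cW vs(2) by (simp add: power_add[symmetric])
    then have "V.span (W \<union> set vs) = Y" by (rule span_Un_indep_over_eq[OF Y'(1,2) WY vs(1,3)])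
    moreover have "indep_over U vs" using indep_over_enlarge[OF Y'(1) U(1) W'(2)] Y'(4) vs by blast
    ultimately show "vs \<in> {vs \<in> {vs. set vs \<subseteq> ambient n \<and> length vs = r - j \<and> indep_over U vs}.
                               V.span (W \<union> set vs) = Y}"
      using vs Y'(2) by auto
  qed
  show "card {vs. set vs \<subseteq> Y \<and> length vs = r - j \<and> indep_over W vs}
      = (\<Prod>i<r-j. ?q ^ r - ?q ^ j * ?q ^ i)"
    using card_indep_over_lists[OF Y'(1,2) WY, of "r - j"] cY cW by simp
qed

lemma card_meeting_subspaces_mult:
  fixes U W :: "(nat \<Rightarrow> 'a::{finite,field}) set"
  assumes U: "V.subspace U" "U \<subseteq> ambient n" "V.dim U = r" and W: "W \<in> subspaces U j"
  shows "card (meeting_subspaces n U W)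
           * (\<Prod>i<r-j. card (UNIV::'a set) ^ r - card (UNIV::'a set) ^ j * card (UNIV::'a set) ^ i)
       = (\<Prod>i<r-j. card (UNIV::'a set) ^ n - card (UNIV::'a set) ^ r * card (UNIV::'a set) ^ i)"
proof -
  let ?q = "card (UNIV::'a set)"
  let ?A = "{vs. set vs \<subseteq> ambient n \<and> length vs = r - j \<and> indep_over U vs}"
  have W': "V.subspace W" "W \<subseteq> U" "V.dim W = j" "W \<subseteq> ambient n"
    using W U by (auto simp: subspaces_def)
  have jr: "j \<le> r" using dim_mono_subspace[OF W'(2,1) U(1,2)] W' U by simp
  have cU: "card (V.span U) = ?q ^ r" using card_span[OF U(2)] U(3) by simp
  have cA: "card ?A = (\<Prod>i<r-j. ?q ^ n - ?q ^ r * ?q ^ i)"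
    using card_indep_over_lists[OF subspace_ambient subset_refl U(2), of "r - j"] cU
      card_ambient[where 'a='a, of n] by simp
  have finA: "finite ?A"
    by (rule finite_subset[OF _ finite_lists_length_eq[OF finite_ambient, of n "r - j"]]) auto
  have img: "(\<lambda>vs. V.span (W \<union> set vs)) ` ?A \<subseteq> meeting_subspaces n U W"
  proof clarify
    fix vs assume vs: "set vs \<subseteq> ambient n" "length vs = r - j" "indep_over U vs"
    have "V.dim (W \<union> set vs) = r"
      using dim_Un_indep_over[OF W'(4) vs(1) indep_over_antimono[OF W'(2) vs(3)]] W'(3) vs(2) jr
      by simp
    moreover have "V.span (W \<union> set vs) \<inter> U = W"
      using span_indep_over_Int_subset[OF W'(1,2) U(1) vs(3)] W'(2)
        V.span_superset[of "W \<union> set vs"] by auto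
    moreover have "V.span (W \<union> set vs) \<subseteq> ambient n"
      using W'(4) vs by (intro span_subset_ambient) auto
    ultimately show "V.span (W \<union> set vs) \<in> meeting_subspaces n U W"
      using U(3) by (simp add: meeting_subspaces_def)
  qed
  have "card ?A = card (meeting_subspaces n U W) * (\<Prod>i<r-j. ?q ^ r - ?q ^ j * ?q ^ i)"
    by (rule card_by_uniform_fibers[OF finA img finite_meeting_subspaces])
      (use meeting_subspaces_fiber[OF U W] in simp)
  then show ?thesis using cA by simp
qed

lemma dI_meeting_subspaces:
  fixes U W :: "(nat \<Rightarrow> 'a::{finite,field}) set"
  assumes U: "V.subspace U" "U \<subseteq> ambient n" "V.dim U = r" and W: "W \<in> subspaces U j"
    and Y: "Y \<in> meeting_subspaces n U W"
  shows "dI U Y = r - j"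
proof -
  let ?q = "card (UNIV::'a set)"
  have W': "V.subspace W" "W \<subseteq> U" "V.dim W = j" using W by (auto simp: subspaces_def)
  have jr: "j \<le> r" using dim_mono_subspace[OF W'(2,1) U(1,2)] W' U by simp
  have "V.dim Y = r" using Y U by (simp add: meeting_subspaces_def)
  have "(\<Prod>i<r-j. ?q ^ r - ?q ^ j * ?q ^ i) > 0"
  proof (rule prod_pos, clarify)
    fix i assume "i < r - j"
    then have "?q ^ (j + i) < ?q ^ r" using two_le_card_field[where 'a='a] jr
      by (intro power_strict_increasing) auto
    then show "0 < ?q ^ r - ?q ^ j * ?q ^ i" by (simp add: power_add)
  qed
  then have "{vs \<in> {vs. set vs \<subseteq> ambient n \<and> length vs = r - j \<and> indep_over U vs}.
               V.span (W \<union> set vs) = Y} \<noteq> {}"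
    using meeting_subspaces_fiber[OF U W Y] by (metis card.empty less_irrefl)
  then obtain vs where vs: "set vs \<subseteq> ambient n" "length vs = r - j" "indep_over U vs"
      "V.span (W \<union> set vs) = Y"
    by auto
  have "V.span (U \<union> Y) = V.span (U \<union> set vs)"
  proof
    have "Y \<subseteq> V.span (U \<union> set vs)"
      using vs(4) W'(2) V.span_mono[of "W \<union> set vs" "U \<union> set vs"] by auto
    then show "V.span (U \<union> Y) \<subseteq> V.span (U \<union> set vs)"
      by (intro V.span_minimal) (auto intro: V.span_base)
    have "set vs \<subseteq> Y" using vs(4) V.span_superset[of "W \<union> set vs"] by auto
    then show "V.span (U \<union> set vs) \<subseteq> V.span (U \<union> Y)" by (intro V.span_mono) auto
  qed
  then have "V.dim (U \<union> Y) = V.dim (U \<union> set vs)" by (metis V.dim_span)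
  also have "\<dots> = r + (r - j)" using dim_Un_indep_over[OF U(2) vs(1,3)] U(3) vs(2) by simp
  finally have "V.dim (U \<union> Y) = r + (r - j)" .
  then show ?thesis unfolding dI_def sdim_eq_dim using U(3) \<open>V.dim Y = r\<close> by simp
qed

section \<open>Gaussian binomial coefficients as subspace counts\<close>

text \<open>\<open>gl_order q m\<close> is the order of \<open>GL\<^sub>m(q)\<close>.\<close>

definition gl_order :: "real \<Rightarrow> nat \<Rightarrow> real" where
  "gl_order q m = (\<Prod>i<m. q ^ m - q ^ i)"

lemma gl_order_pos: "1 < q \<Longrightarrow> 0 < gl_order q m"
  unfolding gl_order_def by (rule prod_pos) (auto intro: power_strict_increasing)

lemma prod_lessThan_add:
  fixes a b :: nat
  shows "(\<Prod>i<a+b. f i) = (\<Prod>i<a. f i) * (\<Prod>i<b. f (a + i))"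
  by (induction b) (simp_all add: mult.assoc)

lemma gl_order_split:
  assumes "k \<le> m"
  shows "gl_order q m = (\<Prod>i<k. q ^ m - q ^ i) * (q ^ (k * (m - k)) * gl_order q (m - k))"
proof -
  have "gl_order q m = (\<Prod>i<k + (m - k). q ^ m - q ^ i)" using assms by (simp add: gl_order_def)
  also have "\<dots> = (\<Prod>i<k. q ^ m - q ^ i) * (\<Prod>i<m-k. q ^ k * (q ^ (m - k) - q ^ i))"
    unfolding prod_lessThan_add using assms
    by (simp add: algebra_simps power_add[symmetric])
  also have "(\<Prod>i<m-k. q ^ k * (q ^ (m - k) - q ^ i)) = q ^ (k * (m - k)) * gl_order q (m - k)"
    by (simp add: prod.distrib gl_order_def power_mult)
  finally show ?thesis .
qed

lemma gauss_binom_eq_gl_order: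
  assumes "k \<le> m" "1 < q"
  shows "gauss_binom q m k = gl_order q m / (q ^ (k * (m - k)) * gl_order q k * gl_order q (m - k))"
proof -
  have "gauss_binom q m k = (\<Prod>i<k. q ^ m - q ^ i) / gl_order q k"
    by (simp add: gauss_binom_def prod_dividef gl_order_def)
  moreover have "q ^ (k * (m - k)) * gl_order q (m - k) \<noteq> 0"
    using assms gl_order_pos[OF assms(2), of "m - k"] by simp
  ultimately show ?thesis using gl_order_split[OF assms(1), of q] by (simp add: field_simps)
qed

lemma gauss_binom_symmetric:
  assumes "k \<le> m" "1 < q"
  shows "gauss_binom q m k = gauss_binom q m (m - k)"
proof -
  have "k * (m - k) = (m - k) * (m - (m - k))" using assms by simp
  then show ?thesis using gauss_binom_eq_gl_order[OF assms] gauss_binom_eq_gl_order[of "m - k" m q] assms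
    by (simp add: mult_ac)
qed

lemma gauss_binom_pos:
  assumes "k \<le> m" "1 < q"
  shows "0 < gauss_binom q m k"
  unfolding gauss_binom_def
proof (rule prod_pos, clarify)
  fix i assume "i < k"
  then have "q ^ i < q ^ k" "q ^ i < q ^ m" using assms by (auto intro: power_strict_increasing)
  then show "0 < (q ^ m - q ^ i) / (q ^ k - q ^ i)" by simp
qed

lemma of_nat_prod_diff:
  assumes "\<And>i. i < k \<Longrightarrow> b i \<le> (a i :: nat)"
  shows "real (\<Prod>i<k. a i - b i) = (\<Prod>i<k. real (a i) - real (b i))"
  unfolding of_nat_prod using assms by (intro prod.cong) (auto simp: of_nat_diff)

lemma card_subspaces:
  fixes S :: "(nat \<Rightarrow> 'a::{finite,field}) set"
  assumes S: "V.subspace S" "S \<subseteq> ambient n" "card S = card (UNIV::'a set) ^ m" and km: "k \<le> m"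
  shows "real (card (subspaces S k)) = gauss_binom (real (card (UNIV::'a set))) m k"
proof -
  let ?q = "card (UNIV::'a set)" let ?Q = "real ?q"
  have q1: "1 \<le> ?q" and Q1: "1 < ?Q" using two_le_card_field[where 'a='a] by simp_all
  have "real (\<Prod>i<k. ?q ^ k - ?q ^ i) = gl_order ?Q k"
    unfolding gl_order_def by (subst of_nat_prod_diff) (use q1 in \<open>auto intro: power_increasing\<close>)
  moreover have "real (\<Prod>i<k. ?q ^ m - ?q ^ i) = (\<Prod>i<k. ?Q ^ m - ?Q ^ i)"
    by (subst of_nat_prod_diff) (use q1 km in \<open>auto intro: power_increasing\<close>)
  ultimately have eq: "real (card (subspaces S k)) * gl_order ?Q k = (\<Prod>i<k. ?Q ^ m - ?Q ^ i)"
    using arg_cong[OF card_subspaces_mult[OF S(1,2), of k], of real] S(3) by simp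
  have "gauss_binom ?Q m k = (\<Prod>i<k. ?Q ^ m - ?Q ^ i) / gl_order ?Q k"
    by (simp add: gauss_binom_def prod_dividef gl_order_def)
  also have "\<dots> = real (card (subspaces S k))"
    using gl_order_pos[OF Q1, of k] by (simp add: eq[symmetric])
  finally show ?thesis by simp
qed

lemma prod_quotient_eq_power_gauss_binom:
  fixes q :: real
  assumes "j + d = r" "r + d \<le> n" "1 < q"
  shows "(\<Prod>i<d. q ^ n - q ^ r * q ^ i) / (\<Prod>i<d. q ^ r - q ^ j * q ^ i)
       = q ^ (d^2) * gauss_binom q (n - r) d"
proof -
  have "(\<Prod>i<d. q ^ n - q ^ r * q ^ i) = (\<Prod>i<d. q ^ r * (q ^ (n - r) - q ^ i))"
    using assms by (intro prod.cong) (simp_all add: algebra_simps power_add[symmetric])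
  then have num: "(\<Prod>i<d. q ^ n - q ^ r * q ^ i) = q ^ (r * d) * (\<Prod>i<d. q ^ (n - r) - q ^ i)"
    by (simp add: prod.distrib power_mult)
  have "(\<Prod>i<d. q ^ r - q ^ j * q ^ i) = (\<Prod>i<d. q ^ j * (q ^ d - q ^ i))"
    using assms by (intro prod.cong) (simp_all add: algebra_simps power_add[symmetric])
  then have den: "(\<Prod>i<d. q ^ r - q ^ j * q ^ i) = q ^ (j * d) * gl_order q d"
    by (simp add: prod.distrib power_mult gl_order_def)
  have "r * d = j * d + d ^ 2" using assms(1) by (simp add: power2_eq_square algebra_simps flip: assms(1))
  then have "q ^ (r * d) = q ^ (j * d) * q ^ (d ^ 2)" by (simp add: power_add[symmetric])
  then show ?thesis
    unfolding num den gauss_binom_def using gl_order_pos[OF assms(3), of d] assms(3)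
    by (simp add: prod_dividef gl_order_def field_simps)
qed

lemma card_meeting_subspaces:
  fixes U W :: "(nat \<Rightarrow> 'a::{finite,field}) set"
  assumes U: "V.subspace U" "U \<subseteq> ambient n" "V.dim U = r" and W: "W \<in> subspaces U j"
    and jr: "j \<le> r" and rn: "r + (r - j) \<le> n"
  shows "real (card (meeting_subspaces n U W))
       = real (card (UNIV::'a set)) ^ ((r - j)^2) * gauss_binom (real (card (UNIV::'a set))) (n - r) (r - j)"
proof -
  let ?q = "card (UNIV::'a set)" let ?Q = "real ?q"
  let ?d = "r - j"
  have q1: "1 \<le> ?q" and Q1: "1 < ?Q" using two_le_card_field[where 'a='a] by simp_all
  have "real (\<Prod>i<?d. ?q ^ r - ?q ^ j * ?q ^ i) = (\<Prod>i<?d. ?Q ^ r - ?Q ^ j * ?Q ^ i)"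
    by (subst of_nat_prod_diff)
      (use q1 jr in \<open>auto simp flip: power_add intro: power_increasing\<close>)
  moreover have "real (\<Prod>i<?d. ?q ^ n - ?q ^ r * ?q ^ i) = (\<Prod>i<?d. ?Q ^ n - ?Q ^ r * ?Q ^ i)"
    by (subst of_nat_prod_diff)
      (use q1 rn in \<open>auto simp flip: power_add intro: power_increasing\<close>)
  ultimately have eq: "real (card (meeting_subspaces n U W)) * (\<Prod>i<?d. ?Q ^ r - ?Q ^ j * ?Q ^ i)
      = (\<Prod>i<?d. ?Q ^ n - ?Q ^ r * ?Q ^ i)"
    using arg_cong[OF card_meeting_subspaces_mult[OF U W], of real] by simp
  have pos: "0 < (\<Prod>i<?d. ?Q ^ r - ?Q ^ j * ?Q ^ i)"
  proof (rule prod_pos, clarify)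
    fix i assume "i < ?d"
    then have "?Q ^ (j + i) < ?Q ^ r" using Q1 by (intro power_strict_increasing) auto
    then show "0 < ?Q ^ r - ?Q ^ j * ?Q ^ i" by (simp add: power_add)
  qed
  have "real (card (meeting_subspaces n U W))
      = (\<Prod>i<?d. ?Q ^ n - ?Q ^ r * ?Q ^ i) / (\<Prod>i<?d. ?Q ^ r - ?Q ^ j * ?Q ^ i)"
    using pos eq by (subst nonzero_eq_divide_eq) linarith+
  also have "\<dots> = ?Q ^ (?d^2) * gauss_binom ?Q (n - r) ?d"
    by (rule prod_quotient_eq_power_gauss_binom) (use jr rn Q1 in auto)
  finally show ?thesis .
qed

section \<open>Balls in the Grassmannian\<close>

lemma finite_Er: "finite (Er (T :: 'a::{finite,field} itself) n r)"
  unfolding Er_eq_subspaces by (rule finite_subspaces[OF subset_refl])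

lemma card_Er:
  fixes T :: "'a::{finite,field} itself"
  assumes "r \<le> n"
  shows "real (card (Er T n r)) = gauss_binom (real (card (UNIV::'a set))) n r"
  unfolding Er_eq_subspaces
  by (rule card_subspaces[OF subspace_ambient subset_refl card_ambient assms])

lemma NC_pos: "1 < q \<Longrightarrow> d \<le> r \<Longrightarrow> 2 * r \<le> n \<Longrightarrow> 0 < NC q n r d"
  unfolding NC_def by (intro mult_pos_pos gauss_binom_pos) auto

lemma VC_strict_mono:
  assumes "1 < q" "t < s" "s \<le> r" "2 * r \<le> n"
  shows "VC q n r t < VC q n r s"
proof -
  have "{0..s} = {0..t} \<union> {Suc t..s}" using assms(2) by auto
  then have "VC q n r s = VC q n r t + (\<Sum>d = Suc t..s. NC q n r d)"
    unfolding VC_def by (simp add: sum.union_disjoint)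
  moreover have "0 < (\<Sum>d = Suc t..s. NC q n r d)"
    using assms by (intro sum_pos NC_pos) auto
  ultimately show ?thesis by simp
qed

lemma card_UN_meeting_subspaces:
  fixes U :: "(nat \<Rightarrow> 'a::{finite,field}) set"
  assumes U: "V.subspace U" "U \<subseteq> ambient n" "V.dim U = r" and rn: "2 * r \<le> n" and tr: "t \<le> r"
  shows "real (card (\<Union>W\<in>(\<Union>j\<in>{r-t..r}. subspaces U j). meeting_subspaces n U W))
       = VC (real (card (UNIV::'a set))) n r t"
proof -
  let ?Q = "real (card (UNIV::'a set))"
  let ?WW = "\<Union>j\<in>{r-t..r}. subspaces U j"
  have Q1: "1 < ?Q" using two_le_card_field[where 'a='a] by simp
  have cU: "card U = card (UNIV::'a set) ^ r" using card_subspace[OF U(2,1)] U(3) by simp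
  have "card (\<Union>W\<in>?WW. meeting_subspaces n U W) = (\<Sum>W\<in>?WW. card (meeting_subspaces n U W))"
  proof (rule card_UN_disjoint)
    show "finite ?WW" using finite_subspaces[OF U(2)] by blast
    show "\<forall>W\<in>?WW. finite (meeting_subspaces n U W)" using finite_meeting_subspaces by blast
    show "\<forall>W\<in>?WW. \<forall>W'\<in>?WW. W \<noteq> W' \<longrightarrow> meeting_subspaces n U W \<inter> meeting_subspaces n U W' = {}"
      by (auto simp: meeting_subspaces_def)
  qed
  then have "real (card (\<Union>W\<in>?WW. meeting_subspaces n U W))
      = (\<Sum>W\<in>?WW. real (card (meeting_subspaces n U W)))" by simp
  also have "\<dots> = (\<Sum>j\<in>{r-t..r}. \<Sum>W\<in>subspaces U j. real (card (meeting_subspaces n U W)))"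
    by (rule sum.UNION_disjoint) (use finite_subspaces[OF U(2)] in \<open>auto simp: subspaces_def\<close>)
  also have "\<dots> = (\<Sum>j\<in>{r-t..r}. NC ?Q n r (r - j))"
  proof (rule sum.cong[OF refl])
    fix j assume j: "j \<in> {r-t..r}"
    have "(\<Sum>W\<in>subspaces U j. real (card (meeting_subspaces n U W)))
        = real (card (subspaces U j)) * (?Q ^ ((r - j)^2) * gauss_binom ?Q (n - r) (r - j))"
      using card_meeting_subspaces[OF U] j rn by simp
    also have "real (card (subspaces U j)) = gauss_binom ?Q r (r - j)"
      using card_subspaces[OF U(1,2) cU] gauss_binom_symmetric[of j r ?Q] j Q1 by simp
    finally show "(\<Sum>W\<in>subspaces U j. real (card (meeting_subspaces n U W))) = NC ?Q n r (r - j)"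
      by (simp add: NC_def)
  qed
  also have "\<dots> = VC ?Q n r t"
    unfolding VC_def
    by (rule sum.reindex_bij_witness[of _ "\<lambda>d. r - d" "\<lambda>j. r - j"]) (use tr in auto)
  finally show ?thesis .
qed

lemma VC_le_card_ball:
  fixes T :: "'a::{finite,field} itself"
  assumes U: "U \<in> Er T n r" and rn: "2 * r \<le> n" and tr: "t \<le> r"
  shows "VC (real (card (UNIV::'a set))) n r t \<le> real (card {Y \<in> Er T n r. dI U Y \<le> t})"
proof -
  have U': "V.subspace U" "U \<subseteq> ambient n" "V.dim U = r"
    using U by (auto simp: Er_eq_subspaces subspaces_def)
  have "(\<Union>W\<in>(\<Union>j\<in>{r-t..r}. subspaces U j). meeting_subspaces n U W) \<subseteq> {Y \<in> Er T n r. dI U Y \<le> t}"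
  proof clarify
    fix Y W j assume j: "j \<in> {r-t..r}" and W: "W \<in> subspaces U j"
      and Y: "Y \<in> meeting_subspaces n U W"
    have "Y \<in> Er T n r" using Y U'(3) by (auto simp: meeting_subspaces_def Er_eq_subspaces subspaces_def)
    moreover have "dI U Y = r - j" by (rule dI_meeting_subspaces[OF U' W Y])
    ultimately show "Y \<in> Er T n r \<and> dI U Y \<le> t" using j by auto
  qed
  then have "card (\<Union>W\<in>(\<Union>j\<in>{r-t..r}. subspaces U j). meeting_subspaces n U W)
      \<le> card {Y \<in> Er T n r. dI U Y \<le> t}"
    by (rule card_mono[rotated]) (simp add: finite_Er)
  then show ?thesis using card_UN_meeting_subspaces[OF U' rn tr] by simp
qed

lemma VC_less_gauss_binom:
  assumes "2 * r \<le> n" "t < r"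
  shows "VC (real (card (UNIV::'a::{finite,field} set))) n r t
       < gauss_binom (real (card (UNIV::'a set))) n r"
proof -
  let ?Q = "real (card (UNIV::'a set))"
  let ?E = "Er (TYPE('a)) n r"
  have Q1: "1 < ?Q" using two_le_card_field[where 'a='a] by simp
  have cardE: "real (card ?E) = gauss_binom ?Q n r" by (rule card_Er) (use assms(1) in simp)
  then have "0 < real (card ?E)" using gauss_binom_pos[of r n ?Q] Q1 assms(1) by simp
  then obtain U where U: "U \<in> ?E" by fastforce
  have "VC ?Q n r t < VC ?Q n r r" using VC_strict_mono Q1 assms by blast
  also have "\<dots> \<le> real (card {Y \<in> ?E. dI U Y \<le> r})" using VC_le_card_ball[OF U assms(1)] by simp
  also have "\<dots> \<le> real (card ?E)" by (simp add: card_mono finite_Er)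
  finally show ?thesis using cardE by simp
qed

section \<open>The covering argument\<close>

lemma exists_covering_list:
  fixes E :: "'b set" and close :: "'b \<Rightarrow> 'b \<Rightarrow> bool" and V :: real
  assumes finE: "finite E"
    and ball: "\<And>U. U \<in> E \<Longrightarrow> V \<le> real (card {Y \<in> E. close U Y})"
    and small: "real (card E) * (real (card E) - V) ^ k < real (card E) ^ k"
  shows "\<exists>xs. set xs \<subseteq> E \<and> length xs = k \<and> (\<forall>U\<in>E. \<exists>D\<in>set xs. close U D)"
proof (rule ccontr)
  assume no_cover: "\<nexists>xs. set xs \<subseteq> E \<and> length xs = k \<and> (\<forall>U\<in>E. \<exists>D\<in>set xs. close U D)"
  let ?miss = "\<lambda>U. {xs. set xs \<subseteq> E - {Y \<in> E. close U Y} \<and> length xs = k}"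
  have "{xs. set xs \<subseteq> E \<and> length xs = k} \<subseteq> (\<Union>U\<in>E. ?miss U)"
  proof
    fix xs assume "xs \<in> {xs. set xs \<subseteq> E \<and> length xs = k}"
    then have xs: "set xs \<subseteq> E" "length xs = k" by auto
    then obtain U where "U \<in> E" "\<forall>D\<in>set xs. \<not> close U D" using no_cover by blast
    then show "xs \<in> (\<Union>U\<in>E. ?miss U)" using xs by auto
  qed
  then have "card {xs. set xs \<subseteq> E \<and> length xs = k} \<le> card (\<Union>U\<in>E. ?miss U)"
    by (rule card_mono[rotated])
      (rule finite_UN_I[OF finE finite_lists_length_eq[OF finite_Diff[OF finE]]])
  then have "card E ^ k \<le> card (\<Union>U\<in>E. ?miss U)" by (simp add: card_lists_length_eq[OF finE])
  also have "\<dots> \<le> (\<Sum>U\<in>E. card (?miss U))" by (rule card_UN_le[OF finE])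
  also have "\<dots> = (\<Sum>U\<in>E. card (E - {Y \<in> E. close U Y}) ^ k)"
    by (rule sum.cong[OF refl], rule card_lists_length_eq) (use finE in blast)
  finally have "real (card E ^ k) \<le> real (\<Sum>U\<in>E. card (E - {Y \<in> E. close U Y}) ^ k)"
    by (simp only: of_nat_le_iff)
  then have "real (card E) ^ k \<le> (\<Sum>U\<in>E. real (card (E - {Y \<in> E. close U Y})) ^ k)"
    by simp
  also have "\<dots> \<le> (\<Sum>U\<in>E. (real (card E) - V) ^ k)"
  proof (rule sum_mono)
    fix U assume U: "U \<in> E"
    have sub: "{Y \<in> E. close U Y} \<subseteq> E" by blast
    have "real (card (E - {Y \<in> E. close U Y})) = real (card E) - real (card {Y \<in> E. close U Y})"
      using card_Diff_subset[OF finite_subset[OF sub finE] sub] card_mono[OF finE sub]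
      by (simp add: of_nat_diff)
    also have "\<dots> \<le> real (card E) - V" using ball[OF U] by simp
    finally show "real (card (E - {Y \<in> E. close U Y})) ^ k \<le> (real (card E) - V) ^ k"
      by (intro power_mono) auto
  qed
  also have "\<dots> < real (card E) ^ k" using small by simp
  finally show False by simp
qed

lemma exists_list_length_bound:
  fixes N V :: real
  assumes "1 < N" "0 < V" "V < N"
  shows "\<exists>k::nat. real k \<le> 1 / (1 - log N (N - V)) + 1 \<and> N * (N - V) ^ k < N ^ k"
proof -
  define x where "x = 1 / (1 - log N (N - V))"
  have lnN: "0 < ln N" and lt: "ln (N - V) < ln N" using assms by simp_all
  have x_eq: "x = ln N / (ln N - ln (N - V))"
    unfolding x_def log_def using lnN by (simp add: field_simps)
  then have "0 < x" using lnN lt by simp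
  define k where "k = nat \<lfloor>x\<rfloor> + 1"
  have "x < real k" "real k \<le> x + 1" unfolding k_def using \<open>0 < x\<close> by linarith+
  have "ln N = x * (ln N - ln (N - V))" unfolding x_eq using lt by simp
  also have "\<dots> < real k * (ln N - ln (N - V))"
    using \<open>x < real k\<close> lt by (intro mult_strict_right_mono) auto
  finally have "ln (N * (N - V) ^ k) < ln (N ^ k)"
    using assms by (simp add: ln_mult ln_realpow algebra_simps)
  then have "N * (N - V) ^ k < N ^ k" using assms by simp
  with \<open>real k \<le> x + 1\<close> show ?thesis unfolding x_def by blast
qed

lemma KC_le_card:
  fixes T :: "'a::{finite,field} itself"
  assumes "C \<subseteq> Er T n r" "C \<noteq> {}" "\<And>U. U \<in> Er T n r \<Longrightarrow> \<exists>D\<in>C. dI U D \<le> \<rho>"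
  shows "KC T n r \<rho> \<le> card C"
proof -
  have finC: "finite C" using assms(1) finite_Er finite_subset by blast
  have "Min ((\<lambda>D. dI U D) ` C) \<le> \<rho>" if "U \<in> Er T n r" for U
    using assms(3)[OF that] finC by (meson Min_le dual_order.trans finite_imageI image_eqI)
  moreover have "Er T n r \<noteq> {}" using assms(1,2) by blast
  ultimately have "covering_radius T n r C \<le> \<rho>"
    unfolding covering_radius_def by (intro Max.boundedI) (auto simp: finite_Er)
  moreover have "finite {card C | C. C \<subseteq> Er T n r \<and> C \<noteq> {} \<and> covering_radius T n r C \<le> \<rho>}"
    by (rule finite_subset[of _ "card ` Pow (Er T n r)"]) (auto simp: finite_Er)
  ultimately show ?thesis
    unfolding KC_def using assms(1,2) by (intro Min_le) auto
qed

theorem proposition8: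
  fixes T :: "'a::{finite,field} itself" and n r \<rho> :: nat
  assumes "r \<le> n div 2" and "0 < \<rho>" and "\<rho> < r"
  shows "real (KC T n r \<rho>)
    \<le> 1 / (1 - log (gauss_binom (real (card (UNIV :: 'a set))) n r)
                  (gauss_binom (real (card (UNIV :: 'a set))) n r - VC (real (card (UNIV :: 'a set))) n r \<rho>)) + 1"
proof -
  let ?Q = "real (card (UNIV :: 'a set))"
  let ?N = "gauss_binom ?Q n r" and ?V = "VC ?Q n r \<rho>"
  have rn: "2 * r \<le> n" using assms(1) by linarith
  have "1 = VC ?Q n r 0" by (simp add: VC_def NC_def gauss_binom_def)
  also have "\<dots> < ?V" using VC_strict_mono two_le_card_field[where 'a='a] assms rn by simp
  finally have V: "1 < ?V" "?V < ?N" using VC_less_gauss_binom[OF rn assms(3)] by simp_all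
  then obtain k where k: "real k \<le> 1 / (1 - log ?N (?N - ?V)) + 1" "?N * (?N - ?V) ^ k < ?N ^ k"
    using exists_list_length_bound[of ?N ?V] by auto
  have "\<exists>xs. set xs \<subseteq> Er T n r \<and> length xs = k \<and> (\<forall>U\<in>Er T n r. \<exists>D\<in>set xs. dI U D \<le> \<rho>)"
    using VC_le_card_ball[OF _ rn less_imp_le[OF assms(3)]] k(2) card_Er[of r n T] rn
    by (intro exists_covering_list finite_Er) simp_all
  then obtain xs where xs: "set xs \<subseteq> Er T n r" "length xs = k"
      "\<forall>U\<in>Er T n r. \<exists>D\<in>set xs. dI U D \<le> \<rho>" by blast
  have "Er T n r \<noteq> {}" using card_Er[of r n T] V rn by auto
  then have "KC T n r \<rho> \<le> card (set xs)" using xs by (intro KC_le_card) auto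
  also have "\<dots> \<le> k" using xs(2) card_length by metis
  finally show ?thesis using k(1) by linarith
qed

end
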